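(* For every $n\in\mathbb{N}$, \[ t(n)\, n = \sum_{\substack{k\geq 0 \\ T(k)<n}} \left(\sigma^{o}(n- T(k)) - \sigma^{E}(n-T(k))\right). \]
   Context: $\mathbb{N}=\{1,2,3,\ldots\}$, $\mathbb{N}_0=\{0,1,2,\ldots\}$. For $m\in\mathbb{N}_0$, $T(m)=\frac{m(m+1)}{2}$; a number $n\in\mathbb{N}_0$ is triangular if $n=T(m)$ for some $m\in\mathbb{N}_0$, and $t(n)=1$ if $n$ is triangular, $t(n)=0$ otherwise. For $m\in\mathbb{N}$, $\sigma^{o}(m)=\sum_{d\mid m,\ d \text{ odd}} d$ and $\sigma^{E}(m)=\sum_{d\mid m,\ d\text{ even}} d$ (sums over positive divisors). *)

theory Defs
  imports Main
begin

definition T :: "nat \<Rightarrow> nat" where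
  "T m = m * (m + 1) div 2"

definition triangular :: "nat \<Rightarrow> bool" where
  "triangular n \<longleftrightarrow> (\<exists>m. n = T m)"

definition t :: "nat \<Rightarrow> nat" where
  "t n = (if triangular n then 1 else 0)"

definition sigma_odd :: "nat \<Rightarrow> nat" where
  "sigma_odd m = (\<Sum>d\<in>{d. d dvd m \<and> odd d}. d)"

definition sigma_even :: "nat \<Rightarrow> nat" where
  "sigma_even m = (\<Sum>d\<in>{d. d dvd m \<and> even d}. d)"

end

theory Submission
  imports Defs
begin

(* Since (2k + 1)^2 = 8 T(k) + 1, a pair (k, d) with d dividing n - T(k) is the same as a solution
   (u, d, e) of u^2 + 8de = 8n + 1 with u = 2k + 1 > 0 and d, e >= 1.  Hence, by the symmetry
   u -> -u, twice the right-hand side is the sum of (-1)^(d+1) d over all solutions with u odd.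
   Explicit bijections of this solution set -- an involution of the odd-d solutions with
   d < u + 2e, a shift from those with d > u + 2e onto the even-d ones, and the swap
   (u, d, e) -> (-u, 2e, d/2) among the even-d ones -- cancel everything except the solutions on
   the line d = u + 2e, which contribute d - u = 2e.  On that line u^2 + 8de = (u + 4e)^2, so such
   solutions exist only when 8n + 1 = (2m + 1)^2, i.e. n = T(m); then e runs over 1..m and the
   contribution is 2 T(m) = 2n. *)

definition reps :: "int \<Rightarrow> (int \<times> int \<times> int) set" where
  "reps N = {(u, d, e). odd u \<and> d \<ge> 1 \<and> e \<ge> 1 \<and> u\<^sup>2 + 8 * d * e = N}"

lemma mem_reps:
  "(u, d, e) \<in> reps N \<longleftrightarrow> odd u \<and> d \<ge> 1 \<and> e \<ge> 1 \<and> u\<^sup>2 + 8 * d * e = N"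
  by (simp add: reps_def)

lemma finite_reps: "finite (reps N)"
proof (rule finite_subset)
  show "reps N \<subseteq> {-\<bar>N\<bar>..\<bar>N\<bar>} \<times> {1..\<bar>N\<bar>} \<times> {1..\<bar>N\<bar>}"
  proof
    fix x assume "x \<in> reps N"
    then obtain u d e where x: "x = (u, d, e)"
      and h: "odd u" "d \<ge> 1" "e \<ge> 1" "u\<^sup>2 + 8 * d * e = N" by (cases x) (auto simp: mem_reps)
    have "1 \<le> \<bar>u\<bar>" using h(1) by (cases "u = 0") auto
    then have "\<bar>u\<bar> * 1 \<le> \<bar>u\<bar> * \<bar>u\<bar>" by (intro mult_left_mono) auto
    then have "\<bar>u\<bar> \<le> u\<^sup>2" by (simp add: power2_eq_square abs_mult[symmetric])
    moreover have "d \<le> d * e" "e \<le> d * e" "8 * d * e = 8 * (d * e)" using h(2,3) by simp_all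
    ultimately have "\<bar>u\<bar> \<le> N" "d \<le> N" "e \<le> N" using h(2-4) by linarith+
    then show "x \<in> {-\<bar>N\<bar>..\<bar>N\<bar>} \<times> {1..\<bar>N\<bar>} \<times> {1..\<bar>N\<bar>}"
      using h x by auto
  qed
qed simp

lemma finite_subset_reps: "X \<subseteq> reps N \<Longrightarrow> finite X"
  using finite_reps finite_subset by blast

lemma sum_reps_reflect:
  "(\<Sum>(u, d, e)\<in>{(u, d, e) \<in> reps N. P u d e}. f u d e) =
   (\<Sum>(u, d, e)\<in>{(u, d, e) \<in> reps N. P (- u) d e}. f (- u) d e)"
  by (rule sum.reindex_bij_witness[where i="\<lambda>(u, d, e). (- u, d, e)" and j="\<lambda>(u, d, e). (- u, d, e)"])
     (auto simp: mem_reps)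

lemma sum_u_reps_odd_d_eq_0: "(\<Sum>(u, d, e)\<in>{(u, d, e) \<in> reps N. odd d}. u) = 0"
proof -
  have "(\<Sum>(u, d, e)\<in>{(u, d, e) \<in> reps N. odd d}. u) = - (\<Sum>(u, d, e)\<in>{(u, d, e) \<in> reps N. odd d}. u)"
    using sum_reps_reflect[where P="\<lambda>u d e. odd d" and f="\<lambda>u d e. u"] by (simp add: sum_negf case_prod_beta)
  then show ?thesis by simp
qed

lemma sum_reps_eq_twice_pos_u:
  fixes f :: "int \<Rightarrow> int \<Rightarrow> 'a::semiring_1"
  shows "(\<Sum>(u, d, e)\<in>reps N. f d e) = 2 * (\<Sum>(u, d, e)\<in>{(u, d, e) \<in> reps N. u > 0}. f d e)"
proof -
  have split: "reps N = {(u, d, e) \<in> reps N. u > 0} \<union> {(u, d, e) \<in> reps N. u < 0}"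
    by (auto simp: mem_reps neq_iff[symmetric]) presburger
  have neg: "(\<Sum>(u, d, e)\<in>{(u, d, e) \<in> reps N. u < 0}. f d e) =
      (\<Sum>(u, d, e)\<in>{(u, d, e) \<in> reps N. u > 0}. f d e)"
    using sum_reps_reflect[where P="\<lambda>u d e. u < 0" and f="\<lambda>u d e. f d e"] by simp
  have "(\<Sum>(u, d, e)\<in>reps N. f d e) =
      (\<Sum>(u, d, e)\<in>{(u, d, e) \<in> reps N. u > 0}. f d e) + (\<Sum>(u, d, e)\<in>{(u, d, e) \<in> reps N. u < 0}. f d e)"
    by (subst split, rule sum.union_disjoint) (auto intro: finite_subset_reps)
  then show ?thesis by (simp only: neg mult_2)
qed

lemma sum_reps_below_diagonal_eq_0:
  "(\<Sum>(u, d, e)\<in>{(u, d, e) \<in> reps N. odd d \<and> d < u + 2 * e}. d - u) = 0"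
proof -
  let ?A = "{(u, d, e) \<in> reps N. odd d \<and> d < u + 2 * e}"
  define \<iota> where "\<iota> = (\<lambda>(u::int, d::int, e::int). (2 * d - u, d, e + (u - d) div 2))"
  have \<iota>: "\<iota> (\<iota> x) = x \<and> \<iota> x \<in> ?A" if "x \<in> ?A" for x
  proof -
    obtain u d e where x: "x = (u, d, e)"
      and h: "odd u" "d \<ge> 1" "e \<ge> 1" "u\<^sup>2 + 8 * d * e = N" "odd d" "d < u + 2 * e"
      using \<open>x \<in> ?A\<close> by (cases x) (auto simp: mem_reps)
    have "even (u - d)" using h(1,5) by simp
    then obtain k where "u - d = 2 * k" by (rule evenE)
    then have k: "u = d + 2 * k" by simp
    have "(d - 2 * k)\<^sup>2 + 8 * d * (e + k) = (d + 2 * k)\<^sup>2 + 8 * d * e"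
      by (simp add: power2_eq_square algebra_simps)
    moreover have "\<iota> x = (d - 2 * k, d, e + k)" by (simp add: \<iota>_def x k)
    ultimately show ?thesis using h by (simp add: \<iota>_def x k mem_reps)
  qed
  have "(\<Sum>(u, d, e)\<in>?A. d - u) = (\<Sum>(u, d, e)\<in>?A. u - d)"
    by (rule sum.reindex_bij_witness[where i=\<iota> and j=\<iota>]) (use \<iota> in \<open>auto simp: \<iota>_def\<close>)
  also have "\<dots> = - (\<Sum>(u, d, e)\<in>?A. d - u)"
    by (simp add: sum_negf[symmetric] case_prod_beta)
  finally show ?thesis by simp
qed

lemma sum_reps_above_diagonal:
  "(\<Sum>(u, d, e)\<in>{(u, d, e) \<in> reps N. odd d \<and> d > u + 2 * e}. d - u) =
   (\<Sum>(u, d, e)\<in>{(u, d, e) \<in> reps N. even d \<and> d + u > 2 * e}. d + 2 * e)"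
proof (rule sum.reindex_bij_witness[where j="\<lambda>(u, d, e). (u + 4 * e, d - u - 2 * e, e)"
                                       and i="\<lambda>(u, d, e). (u - 4 * e, d + u - 2 * e, e)"])
  have "(u + 4 * e)\<^sup>2 + 8 * (d - u - 2 * e) * e = u\<^sup>2 + 8 * d * e" for u d e :: int
    by (simp add: power2_eq_square algebra_simps)
  then show "(\<lambda>(u, d, e). (u + 4 * e, d - u - 2 * e, e)) a
      \<in> {(u, d, e) \<in> reps N. even d \<and> d + u > 2 * e}"
    if "a \<in> {(u, d, e) \<in> reps N. odd d \<and> d > u + 2 * e}" for a
    using that by (auto simp: mem_reps)
  have "(u - 4 * e)\<^sup>2 + 8 * (d + u - 2 * e) * e = u\<^sup>2 + 8 * d * e" for u d e :: int
    by (simp add: power2_eq_square algebra_simps)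
  then show "(\<lambda>(u, d, e). (u - 4 * e, d + u - 2 * e, e)) b
      \<in> {(u, d, e) \<in> reps N. odd d \<and> d > u + 2 * e}"
    if "b \<in> {(u, d, e) \<in> reps N. even d \<and> d + u > 2 * e}" for b
    using that by (auto simp: mem_reps)
qed auto

lemma sum_reps_even_d_swap:
  "(\<Sum>(u, d, e)\<in>{(u, d, e) \<in> reps N. even d \<and> d + u < 2 * e}. d) =
   (\<Sum>(u, d, e)\<in>{(u, d, e) \<in> reps N. even d \<and> d + u > 2 * e}. 2 * e)"
proof (rule sum.reindex_bij_witness[where j="\<lambda>(u, d, e). (- u, 2 * e, d div 2)"
                                       and i="\<lambda>(u, d, e). (- u, 2 * e, d div 2)"])
  show "(\<lambda>(u, d, e). (- u, 2 * e, d div 2)) a \<in> {(u, d, e) \<in> reps N. even d \<and> d + u > 2 * e}"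
    if "a \<in> {(u, d, e) \<in> reps N. even d \<and> d + u < 2 * e}" for a
    using that by (clarsimp simp: mem_reps) (auto elim!: evenE)
  show "(\<lambda>(u, d, e). (- u, 2 * e, d div 2)) b \<in> {(u, d, e) \<in> reps N. even d \<and> d + u < 2 * e}"
    if "b \<in> {(u, d, e) \<in> reps N. even d \<and> d + u > 2 * e}" for b
    using that by (clarsimp simp: mem_reps) (auto elim!: evenE)
qed auto

lemma sum_reps_signed_d_eq_diagonal:
  "(\<Sum>(u, d, e)\<in>reps N. if odd d then d else - d) =
   (\<Sum>(u, d, e)\<in>{(u, d, e) \<in> reps N. d = u + 2 * e}. d - u)"
proof -
  let ?odd = "{(u, d, e) \<in> reps N. odd d}"
  let ?even = "{(u, d, e) \<in> reps N. even d}"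
  let ?below = "{(u, d, e) \<in> reps N. odd d \<and> d < u + 2 * e}"
  let ?diag = "{(u, d, e) \<in> reps N. d = u + 2 * e}"
  let ?above = "{(u, d, e) \<in> reps N. odd d \<and> d > u + 2 * e}"
  let ?lower = "{(u, d, e) \<in> reps N. even d \<and> d + u < 2 * e}"
  let ?upper = "{(u, d, e) \<in> reps N. even d \<and> d + u > 2 * e}"
  have parts: "reps N = ?odd \<union> ?even" "?odd = ?below \<union> (?diag \<union> ?above)"
    "?even = ?upper \<union> ?lower"
    by (auto simp: mem_reps) presburger+
  have "(\<Sum>(u, d, e)\<in>reps N. if odd d then d else - d) =
      (\<Sum>(u, d, e)\<in>?odd. d) + (\<Sum>(u, d, e)\<in>?even. - d)"
    by (subst parts(1), subst sum.union_disjoint)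
      (auto intro: finite_subset_reps intro!: arg_cong2[where f="(+)"] sum.cong)
  also have "(\<Sum>(u, d, e)\<in>?odd. d) = (\<Sum>(u, d, e)\<in>?odd. d - u)"
    using sum_u_reps_odd_d_eq_0[of N] by (simp add: sum_subtractf case_prod_beta)
  also have "\<dots> = (\<Sum>(u, d, e)\<in>?below. d - u) + ((\<Sum>(u, d, e)\<in>?diag. d - u) + (\<Sum>(u, d, e)\<in>?above. d - u))"
    by (subst parts(2), subst sum.union_disjoint, auto intro: finite_subset_reps)
      (subst sum.union_disjoint, auto intro: finite_subset_reps)
  also have "(\<Sum>(u, d, e)\<in>?even. - d) = - ((\<Sum>(u, d, e)\<in>?upper. d) + (\<Sum>(u, d, e)\<in>?lower. d))"
    by (subst parts(3), subst sum.union_disjoint) (auto intro: finite_subset_reps simp: sum_negf case_prod_beta)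
  also have "(\<Sum>(u, d, e)\<in>?upper. d) + (\<Sum>(u, d, e)\<in>?lower. d) = (\<Sum>(u, d, e)\<in>?above. d - u)"
    unfolding sum_reps_even_d_swap sum_reps_above_diagonal by (simp add: sum.distrib case_prod_beta)
  finally show ?thesis by (simp add: sum_reps_below_diagonal_eq_0)
qed

lemma two_T: "2 * T k = k * (k + 1)"
  by (simp add: T_def)

lemma le_T: "k \<le> T k"
  using two_T[of k] by (cases k) auto

lemma two_T_int: "2 * int (T k) = int k * (int k + 1)"
  using arg_cong[OF two_T[of k], of int] by (simp add: algebra_simps)

lemma odd_square_eq_T: "(2 * int k + 1)\<^sup>2 = 8 * int (T k) + 1"
  using two_T_int[of k] by (simp add: power2_eq_square algebra_simps)

lemma triangular_iff_square: "triangular n \<longleftrightarrow> (\<exists>s::int. 8 * int n + 1 = s\<^sup>2)"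
proof
  assume "triangular n"
  then obtain m where "n = T m" by (auto simp: triangular_def)
  then show "\<exists>s. 8 * int n + 1 = s\<^sup>2" using odd_square_eq_T[of m] by metis
next
  assume "\<exists>s::int. 8 * int n + 1 = s\<^sup>2"
  then obtain s :: int where s: "8 * int n + 1 = \<bar>s\<bar>\<^sup>2" by auto
  have "odd (\<bar>s\<bar>\<^sup>2)" unfolding s[symmetric] by simp
  then have "odd \<bar>s\<bar>" by simp
  then obtain k where k: "\<bar>s\<bar> = 2 * k + 1" by (rule oddE)
  then have "k \<ge> 0" by linarith
  then obtain m where "\<bar>s\<bar> = 2 * int m + 1" using k nonneg_int_cases by metis
  then have "int n = int (T m)" using s odd_square_eq_T[of m] by simp
  then show "triangular n" by (auto simp: triangular_def)
qed

lemma diagonal_reps_square: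
  assumes "(u, d, e) \<in> reps N" "d = u + 2 * e"
  shows "N = (u + 4 * e)\<^sup>2"
  using assms by (simp add: mem_reps power2_eq_square algebra_simps)

lemma sum_diagonal_reps_odd_square:
  "(\<Sum>(u, d, e)\<in>{(u, d, e) \<in> reps ((2 * int m + 1)\<^sup>2). d = u + 2 * e}. d - u) = 2 * int (T m)"
proof -
  let ?s = "2 * int m + 1"
  let ?diag = "{(u, d, e) \<in> reps (?s\<^sup>2). d = u + 2 * e}"
  define g where "g = (\<lambda>e::nat. (?s - 4 * int e, ?s - 2 * int e, int e))"
  have "?diag = g ` {1..m}"
  proof (intro equalityI subsetI)
    fix x assume "x \<in> ?diag"
    then obtain u d e where x: "x = (u, d, e)" and mem: "(u, d, e) \<in> reps (?s\<^sup>2)"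
      and diag: "d = u + 2 * e" by auto
    have "(u + 4 * e)\<^sup>2 = ?s\<^sup>2" using diagonal_reps_square[OF mem diag] by simp
    moreover have "d \<ge> 1" "e \<ge> 1" using mem by (simp_all add: mem_reps)
    ultimately have "u + 4 * e = ?s" using diag by simp
    then have "x = g (nat e) \<and> nat e \<in> {1..m}" using x diag \<open>d \<ge> 1\<close> \<open>e \<ge> 1\<close> by (auto simp: g_def)
    then show "x \<in> g ` {1..m}" by blast
  next
    fix x assume "x \<in> g ` {1..m}"
    then obtain e where "e \<in> {1..m}" "x = g e" by blast
    moreover have "(?s - 4 * int e)\<^sup>2 + 8 * (?s - 2 * int e) * int e = ?s\<^sup>2"
      by (simp add: power2_eq_square algebra_simps)
    ultimately show "x \<in> ?diag" by (auto simp: g_def mem_reps)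
  qed
  moreover have "inj_on g {1..m}" by (auto simp: inj_on_def g_def)
  ultimately have "(\<Sum>(u, d, e)\<in>?diag. d - u) = (\<Sum>e\<in>{1..m}. 2 * int e)"
    by (simp add: sum.reindex g_def)
  also have "\<dots> = 2 * (\<Sum>e\<in>{Suc 0..m}. int e)" by (simp add: sum_distrib_left)
  also have "\<dots> = 2 * int (T m)" by (simp only: double_gauss_sum_from_Suc_0 two_T_int)
  finally show ?thesis .
qed

lemma sum_diagonal_reps_8n1:
  "(\<Sum>(u, d, e)\<in>{(u, d, e) \<in> reps (8 * int n + 1). d = u + 2 * e}. d - u) = 2 * int (t n * n)"
proof (cases "triangular n")
  case True
  then obtain m where "n = T m" by (auto simp: triangular_def)
  then show ?thesis
    using sum_diagonal_reps_odd_square[of m] odd_square_eq_T[of m] True by (simp add: t_def)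
next
  case False
  then have empty: "{(u, d, e) \<in> reps (8 * int n + 1). d = u + 2 * e} = {}"
    using diagonal_reps_square triangular_iff_square by blast
  show ?thesis unfolding empty using False by (simp add: t_def)
qed

lemma sigma_odd_minus_sigma_even:
  assumes "m > 0"
  shows "int (sigma_odd m) - int (sigma_even m) = (\<Sum>d | d dvd m. if odd d then int d else - int d)"
proof -
  have "finite {d. d dvd m}" using assms by (simp add: finite_divisors_nat)
  then have "(\<Sum>d | d dvd m. if odd d then int d else - int d) =
      (\<Sum>d | d dvd m \<and> odd d. int d) + (\<Sum>d | d dvd m \<and> even d. - int d)"
    by (simp add: sum.If_cases Int_def)
  then show ?thesis by (simp add: sigma_odd_def sigma_even_def sum_negf)
qed

lemma mem_reps_8n1:
  "(2 * int k + 1, d, e) \<in> reps (8 * int n + 1) \<longleftrightarrow> d \<ge> 1 \<and> e \<ge> 1 \<and> int n = int (T k) + d * e"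
  by (auto simp: mem_reps odd_square_eq_T)

lemma sum_sigma_diff_eq_sum_pos_reps:
  "(\<Sum>k | T k < n. int (sigma_odd (n - T k)) - int (sigma_even (n - T k))) =
   (\<Sum>(u, d, e)\<in>{(u, d, e) \<in> reps (8 * int n + 1). u > 0}. if odd d then d else - d)"
proof -
  let ?K = "{k. T k < n}"
  let ?D = "\<lambda>k. {d. d dvd n - T k}"
  have "finite ?K" by (rule finite_subset[of _ "{..<n}"]) (auto intro: le_less_trans[OF le_T])
  moreover have "\<forall>k\<in>?K. finite (?D k)" by (simp add: finite_divisors_nat)
  ultimately have "(\<Sum>k\<in>?K. int (sigma_odd (n - T k)) - int (sigma_even (n - T k))) =
      (\<Sum>(k, d)\<in>Sigma ?K ?D. if odd d then int d else - int d)"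
    by (simp add: sigma_odd_minus_sigma_even sum.Sigma[symmetric])
  also have "\<dots> = (\<Sum>(u, d, e)\<in>{(u, d, e) \<in> reps (8 * int n + 1). u > 0}. if odd d then d else - d)"
  proof (rule sum.reindex_bij_witness[where j="\<lambda>(k, d). (2 * int k + 1, int d, int ((n - T k) div d))"
                                         and i="\<lambda>(u, d, e). (nat (u div 2), nat d)"])
    fix a assume "a \<in> Sigma ?K ?D"
    then obtain k d q where a: "a = (k, d)" and lt: "T k < n" and q: "n - T k = d * q" by blast
    then have "d > 0" "q > 0" by (auto intro: Nat.gr0I)
    have "int n = int (T k) + int d * int q"
      using lt q by (metis le_add_diff_inverse less_imp_le of_nat_add of_nat_mult)
    then have "(2 * int k + 1, int d, int q) \<in> reps (8 * int n + 1)"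
      unfolding mem_reps_8n1 using \<open>d > 0\<close> \<open>q > 0\<close> by simp
    then show "(\<lambda>(k, d). (2 * int k + 1, int d, int ((n - T k) div d))) a
        \<in> {(u, d, e) \<in> reps (8 * int n + 1). u > 0}"
      using q \<open>d > 0\<close> by (simp add: a)
  next
    fix b assume "b \<in> {(u, d, e) \<in> reps (8 * int n + 1). u > 0}"
    then obtain u d e where b: "b = (u, d, e)" and mem: "(u, d, e) \<in> reps (8 * int n + 1)"
      and "u > 0" by blast
    define k where "k = nat (u div 2)"
    have u: "u = 2 * int k + 1" using mem \<open>u > 0\<close> by (simp add: k_def mem_reps)
    then have "d \<ge> 1" "e \<ge> 1" and n: "int n = int (T k) + d * e"
      using mem mem_reps_8n1 by metis+
    then have "d * e > 0" by simp
    then have "T k < n" using n by linarith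
    then have "n - T k = nat d * nat e"
      using n \<open>d \<ge> 1\<close> \<open>e \<ge> 1\<close> by (simp add: nat_mult_distrib[symmetric])
    then show "(\<lambda>(u, d, e). (nat (u div 2), nat d)) b \<in> Sigma ?K ?D"
      using \<open>T k < n\<close> by (simp add: b k_def[symmetric])
    show "(\<lambda>(k, d). (2 * int k + 1, int d, int ((n - T k) div d))) ((\<lambda>(u, d, e). (nat (u div 2), nat d)) b) = b"
      using \<open>n - T k = nat d * nat e\<close> \<open>d \<ge> 1\<close> \<open>e \<ge> 1\<close> u by (simp add: b k_def[symmetric])
  qed auto
  finally show ?thesis .
qed

theorem theorem3p6:
  fixes n :: nat
  assumes "n \<ge> 1"
  shows "int (t n * n) =
    (\<Sum>k\<in>{k::nat. T k < n}. int (sigma_odd (n - T k)) - int (sigma_even (n - T k)))"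
proof -
  have "2 * (\<Sum>k\<in>{k::nat. T k < n}. int (sigma_odd (n - T k)) - int (sigma_even (n - T k))) =
      (\<Sum>(u, d, e)\<in>reps (8 * int n + 1). if odd d then d else - d)"
    by (simp only: sum_sigma_diff_eq_sum_pos_reps sum_reps_eq_twice_pos_u)
  also have "\<dots> = (\<Sum>(u, d, e)\<in>{(u, d, e) \<in> reps (8 * int n + 1). d = u + 2 * e}. d - u)"
    by (rule sum_reps_signed_d_eq_diagonal)
  also have "\<dots> = 2 * int (t n * n)"
    by (rule sum_diagonal_reps_8n1)
  finally show ?thesis by simp
qed

end
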